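(* Let $X=Y=\mathbb Z$ with $d(n,m)=|n-m|$, and let $f_1=\mathrm{id}_{\mathbb Z}$, $f_2(n)=-n$. Then there is no metric $d\in D(\mathbb Z,\mathbb Z)$ with $M_{d_{f_1}}(\mathbb Z,\mathbb Z)\subset M_d(\mathbb Z,\mathbb Z)$ and $M_{d_{f_2}}(\mathbb Z,\mathbb Z)\subset M_d(\mathbb Z,\mathbb Z)$; in particular the preorder $\preceq$ on $D(\mathbb Z,\mathbb Z)$ is not upwards directed.
   Context: $D(X,Y)$: metrics on $X\sqcup Y$ extending $d_X,d_Y$. $M_d(X,Y)$: norm closure of bounded operators $T:l^2(X)\to l^2(Y)$ with finite propagation (there is $L$ with $\langle T\delta_x,\delta_y\rangle=0$ whenever $d(x,y)\ge L$). $d\preceq d'$ means $M_d\subset M_{d'}$. For an almost isometry $f:X\to Y$ (i.e. $d_X(x,x')-C\le d_Y(f(x),f(x'))\le d_X(x,x')+C$ for some $C>0$), $d_f$ is the metric extending $d_X,d_Y$ with $d_f(x,y)=\inf_{\tilde x\in X}(d_X(x,\tilde x)+C/2+d_Y(f(\tilde x),y))$. *)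

theory Defs
  imports "HOL-Analysis.Analysis"
begin

definition L2 :: "(int \<Rightarrow> complex) set" where
  "L2 = {f. (\<lambda>x. (cmod (f x))\<^sup>2) summable_on UNIV}"

definition l2norm :: "(int \<Rightarrow> complex) \<Rightarrow> real" where
  "l2norm f = sqrt (infsum (\<lambda>x. (cmod (f x))\<^sup>2) UNIV)"

text \<open>Bounded (linear) operators l^2(Z) -> l^2(Z); only the values on L2 matter.\<close>

definition bounded_op :: "((int \<Rightarrow> complex) \<Rightarrow> (int \<Rightarrow> complex)) \<Rightarrow> bool" where
  "bounded_op T \<longleftrightarrow>
     (\<forall>f\<in>L2. T f \<in> L2) \<and>
     (\<forall>f\<in>L2. \<forall>g\<in>L2. T (\<lambda>x. f x + g x) = (\<lambda>y. T f y + T g y)) \<and>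
     (\<forall>c. \<forall>f\<in>L2. T (\<lambda>x. c * f x) = (\<lambda>y. c * T f y)) \<and>
     (\<exists>K. \<forall>f\<in>L2. l2norm (T f) \<le> K * l2norm f)"

definition op_dist :: "((int \<Rightarrow> complex) \<Rightarrow> (int \<Rightarrow> complex)) \<Rightarrow>
    ((int \<Rightarrow> complex) \<Rightarrow> (int \<Rightarrow> complex)) \<Rightarrow> real" where
  "op_dist S T = (SUP f\<in>{f\<in>L2. l2norm f \<le> 1}. l2norm (\<lambda>y. S f y - T f y))"

definition delta :: "int \<Rightarrow> int \<Rightarrow> complex" where
  "delta x = (\<lambda>y. if y = x then 1 else 0)"

text \<open>Metrics on X \<squnion> Y = Z \<squnion> Z (Inl = copy X, Inr = copy Y).\<close>

type_synonym zmetric = "int + int \<Rightarrow> int + int \<Rightarrow> real"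

text \<open>Finite propagation of T : l^2(X) -> l^2(Y) w.r.t. d: <T delta_x, delta_y> = (T delta_x) y.\<close>

definition finite_prop :: "zmetric \<Rightarrow> ((int \<Rightarrow> complex) \<Rightarrow> (int \<Rightarrow> complex)) \<Rightarrow> bool" where
  "finite_prop d T \<longleftrightarrow> (\<exists>L. \<forall>x y. d (Inl x) (Inr y) \<ge> L \<longrightarrow> T (delta x) y = 0)"

text \<open>M_d(Z,Z): norm closure of the bounded finite-propagation operators.\<close>

definition Mop :: "zmetric \<Rightarrow> ((int \<Rightarrow> complex) \<Rightarrow> (int \<Rightarrow> complex)) set" where
  "Mop d = {T. bounded_op T \<and>
     (\<forall>\<epsilon>>0. \<exists>S. bounded_op S \<and> finite_prop d S \<and> op_dist T S < \<epsilon>)}"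

definition Dmet :: "zmetric set" where
  "Dmet = {d. (\<forall>p q. d p q \<ge> 0) \<and> (\<forall>p q. d p q = 0 \<longleftrightarrow> p = q) \<and>
              (\<forall>p q. d p q = d q p) \<and> (\<forall>p q r. d p r \<le> d p q + d q r) \<and>
              (\<forall>a b. d (Inl a) (Inl b) = real_of_int \<bar>a - b\<bar>) \<and>
              (\<forall>a b. d (Inr a) (Inr b) = real_of_int \<bar>a - b\<bar>)}"

definition preceq :: "zmetric \<Rightarrow> zmetric \<Rightarrow> bool" where
  "preceq d d' \<longleftrightarrow> Mop d \<subseteq> Mop d'"

text \<open>The metric d_f for an almost isometry f : Z -> Z with constant C.\<close>

definition dmix :: "(int \<Rightarrow> int) \<Rightarrow> real \<Rightarrow> int \<Rightarrow> int \<Rightarrow> real" where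
  "dmix f C x y = (INF t. real_of_int \<bar>x - t\<bar> + C / 2 + real_of_int \<bar>f t - y\<bar>)"

definition d_f :: "(int \<Rightarrow> int) \<Rightarrow> real \<Rightarrow> zmetric" where
  "d_f f C p q = (case p of
       Inl a \<Rightarrow> (case q of Inl b \<Rightarrow> real_of_int \<bar>a - b\<bar> | Inr y \<Rightarrow> dmix f C a y)
     | Inr a \<Rightarrow> (case q of Inl x \<Rightarrow> dmix f C x a | Inr b \<Rightarrow> real_of_int \<bar>a - b\<bar>))"

end

theory Submission
  imports Defs
begin

text \<open>Approximating \<open>T \<in> M\<^sub>d\<close> within \<open>1/2\<close> by a finite-propagation operator, and bounding
  matrix coefficients by the operator norm, shows that a unit entry \<open>T \<delta>\<^sub>x y = 1\<close> keeps
  \<open>d(x, y)\<close> below the propagation bound. The composition operators \<open>f \<mapsto> f \<circ> id\<close> and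
  \<open>f \<mapsto> f \<circ> uminus\<close> have unit entries at \<open>(y, y)\<close> and \<open>(-y, y)\<close>; if both were in \<open>M\<^sub>d\<close>,
  the triangle inequality through the second copy would bound \<open>d(y, -y) = 2\<bar>y\<bar>\<close> uniformly.
  But the first has finite propagation for \<open>d_f id C\<close>, the second for \<open>d_f uminus C\<close>, and
  each of them also for an explicit metric in \<open>D(\<int>, \<int>)\<close>.\<close>

lemma norm_diff_power2_le: "(cmod (a - b))\<^sup>2 \<le> 2 * (cmod a)\<^sup>2 + 2 * (cmod b)\<^sup>2"
proof -
  have "(cmod (a - b))\<^sup>2 \<le> (cmod a + cmod b)\<^sup>2"
    by (simp add: power_mono norm_triangle_ineq4)
  also have "\<dots> \<le> 2 * (cmod a)\<^sup>2 + 2 * (cmod b)\<^sup>2"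
    using sum_squares_ge_zero[of "cmod a - cmod b" 0] by (simp add: power2_eq_square algebra_simps)
  finally show ?thesis .
qed

lemma l2norm_nonneg: "l2norm f \<ge> 0"
  unfolding l2norm_def by (auto intro: infsum_nonneg)

lemma L2_diff:
  assumes "f \<in> L2" "g \<in> L2"
  shows "(\<lambda>y. f y - g y) \<in> L2"
    and "(l2norm (\<lambda>y. f y - g y))\<^sup>2 \<le> 2 * (l2norm f)\<^sup>2 + 2 * (l2norm g)\<^sup>2"
proof -
  let ?F = "\<lambda>x. (cmod (f x))\<^sup>2" and ?G = "\<lambda>x. (cmod (g x))\<^sup>2"
    and ?D = "\<lambda>x. (cmod (f x - g x))\<^sup>2"
  have sf: "?F summable_on UNIV" and sg: "?G summable_on UNIV"
    using assms by (auto simp: L2_def)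
  have s2: "(\<lambda>x. 2 * ?F x + 2 * ?G x) summable_on UNIV"
    by (intro summable_on_add summable_on_cmult_right sf sg)
  have sd: "?D summable_on UNIV"
    by (rule summable_on_comparison_test[OF s2]) (auto simp: norm_diff_power2_le)
  then show "(\<lambda>y. f y - g y) \<in> L2" by (simp add: L2_def)
  have "infsum ?D UNIV \<le> infsum (\<lambda>x. 2 * ?F x + 2 * ?G x) UNIV"
    by (rule infsum_mono[OF sd s2]) (simp add: norm_diff_power2_le)
  also have "\<dots> = 2 * infsum ?F UNIV + 2 * infsum ?G UNIV"
    by (simp add: infsum_add summable_on_cmult_right sf sg infsum_cmult_right)
  finally show "(l2norm (\<lambda>y. f y - g y))\<^sup>2 \<le> 2 * (l2norm f)\<^sup>2 + 2 * (l2norm g)\<^sup>2"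
    by (simp add: l2norm_def infsum_nonneg)
qed

lemma norm_le_l2norm:
  assumes "g \<in> L2"
  shows "cmod (g y) \<le> l2norm g"
proof -
  have "infsum (\<lambda>x. (cmod (g x))\<^sup>2) {y} \<le> infsum (\<lambda>x. (cmod (g x))\<^sup>2) UNIV"
    by (rule infsum_mono_neutral) (use assms in \<open>auto simp: L2_def\<close>)
  then have "sqrt ((cmod (g y))\<^sup>2) \<le> l2norm g"
    unfolding l2norm_def by (intro real_sqrt_le_mono) simp
  then show ?thesis by simp
qed

lemma delta_L2: "delta x \<in> L2" and l2norm_delta: "l2norm (delta x) = 1"
proof -
  have "(\<lambda>y. (cmod (delta x y))\<^sup>2) summable_on UNIV \<longleftrightarrow> (\<lambda>y. (cmod (delta x y))\<^sup>2) summable_on {x}"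
    by (rule summable_on_cong_neutral) (auto simp: delta_def)
  then show "delta x \<in> L2" by (simp add: L2_def)
  have "infsum (\<lambda>y. (cmod (delta x y))\<^sup>2) UNIV = infsum (\<lambda>y. (cmod (delta x y))\<^sup>2) {x}"
    by (rule infsum_cong_neutral) (auto simp: delta_def)
  then show "l2norm (delta x) = 1" by (simp add: l2norm_def delta_def)
qed

lemma bounded_op_unit_ball_bound:
  assumes "bounded_op T"
  obtains B where "\<And>f. f \<in> L2 \<Longrightarrow> l2norm f \<le> 1 \<Longrightarrow> l2norm (T f) \<le> B"
proof -
  obtain K where K: "\<forall>f\<in>L2. l2norm (T f) \<le> K * l2norm f"
    using assms by (auto simp: bounded_op_def)
  have "l2norm (T f) \<le> \<bar>K\<bar>" if f: "f \<in> L2" "l2norm f \<le> 1" for f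
  proof -
    have "l2norm (T f) \<le> K * l2norm f" using K f(1) by blast
    also have "\<dots> \<le> \<bar>K\<bar> * l2norm f" by (intro mult_right_mono abs_ge_self l2norm_nonneg)
    also have "\<dots> \<le> \<bar>K\<bar>" using f l2norm_nonneg[of f] by (simp add: mult_left_le)
    finally show ?thesis .
  qed
  then show ?thesis by (rule that)
qed

lemma coefficient_diff_le_op_dist:
  assumes T: "bounded_op T" and S: "bounded_op S" and f: "f \<in> L2" "l2norm f \<le> 1"
  shows "cmod (T f y - S f y) \<le> op_dist T S"
proof -
  obtain B1 where B1: "\<And>f. f \<in> L2 \<Longrightarrow> l2norm f \<le> 1 \<Longrightarrow> l2norm (T f) \<le> B1"
    using bounded_op_unit_ball_bound[OF T] by blast
  obtain B2 where B2: "\<And>f. f \<in> L2 \<Longrightarrow> l2norm f \<le> 1 \<Longrightarrow> l2norm (S f) \<le> B2"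
    using bounded_op_unit_ball_bound[OF S] by blast
  have TL: "\<And>g. g \<in> L2 \<Longrightarrow> T g \<in> L2" and SL: "\<And>g. g \<in> L2 \<Longrightarrow> S g \<in> L2"
    using T S by (auto simp: bounded_op_def)
  have "l2norm (\<lambda>y. T g y - S g y) \<le> sqrt (2 * B1\<^sup>2 + 2 * B2\<^sup>2)"
    if g: "g \<in> L2" "l2norm g \<le> 1" for g
  proof -
    have "(l2norm (T g))\<^sup>2 \<le> B1\<^sup>2" "(l2norm (S g))\<^sup>2 \<le> B2\<^sup>2"
      using B1[OF g] B2[OF g] l2norm_nonneg by (auto intro: power_mono)
    then have "(l2norm (\<lambda>y. T g y - S g y))\<^sup>2 \<le> 2 * B1\<^sup>2 + 2 * B2\<^sup>2"
      using L2_diff(2)[OF TL SL, OF g(1) g(1)] by linarith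
    then show ?thesis using real_sqrt_le_mono l2norm_nonneg by fastforce
  qed
  then have bdd: "bdd_above ((\<lambda>f. l2norm (\<lambda>y. T f y - S f y)) ` {f\<in>L2. l2norm f \<le> 1})"
    by (intro bdd_aboveI2) auto
  have "cmod (T f y - S f y) \<le> l2norm (\<lambda>y. T f y - S f y)"
    by (rule norm_le_l2norm[OF L2_diff(1)[OF TL SL]]) (use f in auto)
  also have "\<dots> \<le> op_dist T S"
    unfolding op_dist_def by (rule cSUP_upper[OF _ bdd]) (use f in auto)
  finally show ?thesis .
qed

lemma Mop_unit_entries_bounded_dist:
  assumes "T \<in> Mop d" and unit: "\<And>y. T (delta (\<sigma> y)) y = 1"
  obtains L where "\<And>y. d (Inl (\<sigma> y)) (Inr y) < L"
proof -
  obtain S where S: "bounded_op S" "finite_prop d S" "op_dist T S < 1/2"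
    using assms(1) unfolding Mop_def by (auto dest!: spec[of _ "1/2"])
  obtain L where L: "\<And>x y. d (Inl x) (Inr y) \<ge> L \<Longrightarrow> S (delta x) y = 0"
    using S(2) by (auto simp: finite_prop_def)
  have "d (Inl (\<sigma> y)) (Inr y) < L" for y
  proof (rule ccontr)
    assume "\<not> d (Inl (\<sigma> y)) (Inr y) < L"
    then have "cmod (T (delta (\<sigma> y)) y - S (delta (\<sigma> y)) y) = 1"
      using L unit by simp
    moreover have "cmod (T (delta (\<sigma> y)) y - S (delta (\<sigma> y)) y) \<le> op_dist T S"
      using assms(1) S(1) by (intro coefficient_diff_le_op_dist)
        (auto simp: Mop_def delta_L2 l2norm_delta)
    ultimately show False using S(3) by simp
  qed
  then show ?thesis by (rule that)
qed

definition comp_op :: "(int \<Rightarrow> int) \<Rightarrow> (int \<Rightarrow> complex) \<Rightarrow> (int \<Rightarrow> complex)" where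
  "comp_op \<sigma> f = (\<lambda>y. f (\<sigma> y))"

lemma comp_op_delta: "comp_op \<sigma> (delta (\<sigma> y)) y = 1"
  by (simp add: comp_op_def delta_def)

lemma Dmet_comp_ops_close:
  assumes d: "d \<in> Dmet" and "comp_op \<sigma> \<in> Mop d" "comp_op \<tau> \<in> Mop d"
  obtains B where "\<And>y. \<bar>\<sigma> y - \<tau> y\<bar> < B"
proof -
  obtain L1 where L1: "\<And>y. d (Inl (\<sigma> y)) (Inr y) < L1"
    using Mop_unit_entries_bounded_dist[of _ _ \<sigma>, OF assms(2) comp_op_delta] by blast
  obtain L2 where L2: "\<And>y. d (Inl (\<tau> y)) (Inr y) < L2"
    using Mop_unit_entries_bounded_dist[of _ _ \<tau>, OF assms(3) comp_op_delta] by blast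
  have tri: "d p r \<le> d p q + d q r" and sym: "d p q = d q p"
    and iso: "d (Inl a) (Inl b) = real_of_int \<bar>a - b\<bar>" for p q r a b
    using d unfolding Dmet_def by blast+
  have "real_of_int \<bar>\<sigma> y - \<tau> y\<bar> < L1 + L2" for y
  proof -
    have "real_of_int \<bar>\<sigma> y - \<tau> y\<bar> = d (Inl (\<sigma> y)) (Inl (\<tau> y))"
      by (rule iso[symmetric])
    also have "\<dots> \<le> d (Inl (\<sigma> y)) (Inr y) + d (Inr y) (Inl (\<tau> y))"
      by (rule tri)
    also have "\<dots> = d (Inl (\<sigma> y)) (Inr y) + d (Inl (\<tau> y)) (Inr y)"
      by (simp only: sym[of "Inr y"])
    also have "\<dots> < L1 + L2" using L1 L2 by (rule add_strict_mono)
    finally show ?thesis .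
  qed
  then have "\<bar>\<sigma> y - \<tau> y\<bar> < \<lceil>L1 + L2\<rceil>" for y
    by (meson le_of_int_ceiling less_le_trans of_int_less_iff)
  then show ?thesis by (rule that)
qed

lemma no_Dmet_contains_comp_id_and_uminus:
  assumes "d \<in> Dmet" "comp_op id \<in> Mop d" "comp_op uminus \<in> Mop d"
  shows False
proof -
  obtain B where B: "\<And>y. \<bar>id y - (- y :: int)\<bar> < B"
    using Dmet_comp_ops_close[OF assms] by blast
  show False using B[of "\<bar>B\<bar>"] by simp
qed

lemma bounded_op_comp_op:
  assumes "bij \<sigma>"
  shows "bounded_op (comp_op \<sigma>)"
proof -
  have "comp_op \<sigma> f \<in> L2 \<and> l2norm (comp_op \<sigma> f) = l2norm f" if "f \<in> L2" for f
    using that summable_on_reindex_bij_betw[OF assms, of "\<lambda>x. (cmod (f x))\<^sup>2"]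
      infsum_reindex_bij_betw[OF assms, of "\<lambda>x. (cmod (f x))\<^sup>2"]
    by (simp add: L2_def l2norm_def comp_op_def)
  then show ?thesis unfolding bounded_op_def by (auto simp: comp_op_def intro!: exI[of _ 1])
qed

lemma op_dist_self: "op_dist T T = 0"
proof -
  have zero: "l2norm (\<lambda>y. 0) = 0" by (simp add: l2norm_def)
  then have "(\<lambda>y. 0) \<in> {f\<in>L2. l2norm f \<le> 1}" by (simp add: L2_def)
  then have "{f\<in>L2. l2norm f \<le> 1} \<noteq> {}" by blast
  then show ?thesis unfolding op_dist_def by (simp add: zero)
qed

lemma Mop_if_finite_prop: "bounded_op T \<Longrightarrow> finite_prop d T \<Longrightarrow> T \<in> Mop d"
  unfolding Mop_def using op_dist_self by force

lemma comp_op_in_Mop: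
  assumes "bij \<sigma>" and "\<And>y. d (Inl (\<sigma> y)) (Inr y) \<le> B"
  shows "comp_op \<sigma> \<in> Mop d"
proof (rule Mop_if_finite_prop[OF bounded_op_comp_op[OF assms(1)]])
  have "comp_op \<sigma> (delta x) y = 0" if "B + 1 \<le> d (Inl x) (Inr y)" for x y
    using that assms(2)[of y] by (auto simp: comp_op_def delta_def)
  then show "finite_prop d (comp_op \<sigma>)" unfolding finite_prop_def by blast
qed

lemma dmix_at_image_le:
  assumes "C > 0"
  shows "dmix f C x (f x) \<le> C / 2"
proof -
  have "bdd_below (range (\<lambda>t. real_of_int \<bar>x - t\<bar> + C / 2 + real_of_int \<bar>f t - f x\<bar>))"
    by (rule bdd_belowI2[where m=0]) (use assms in auto)
  then have "dmix f C x (f x) \<le> real_of_int \<bar>x - x\<bar> + C / 2 + real_of_int \<bar>f x - f x\<bar>"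
    unfolding dmix_def by (rule cINF_lower) simp
  then show ?thesis by simp
qed

lemma comp_op_in_Mop_d_f:
  assumes "C > 0" "bij \<sigma>" "\<And>y. f (\<sigma> y) = y"
  shows "comp_op \<sigma> \<in> Mop (d_f f C)"
proof (rule comp_op_in_Mop[OF assms(2)])
  show "d_f f C (Inl (\<sigma> y)) (Inr y) \<le> C / 2" for y
    using dmix_at_image_le[OF assms(1), of f "\<sigma> y"] assms(3) by (simp add: d_f_def)
qed

text \<open>The summand \<open>1\<close> separates points of different copies with the same \<open>g\<close>-value.\<close>

definition sum_metric :: "(int + int \<Rightarrow> real) \<Rightarrow> zmetric" where
  "sum_metric g p q = \<bar>g p - g q\<bar> + (if isl p = isl q then 0 else 1)"

lemma sum_metric_in_Dmet:
  assumes l: "\<And>a b. \<bar>g (Inl a) - g (Inl b)\<bar> = real_of_int \<bar>a - b\<bar>"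
    and r: "\<And>a b. \<bar>g (Inr a) - g (Inr b)\<bar> = real_of_int \<bar>a - b\<bar>"
  shows "sum_metric g \<in> Dmet"
proof -
  have "sum_metric g p q = 0 \<longleftrightarrow> p = q" for p q
    using l r by (cases p; cases q) (auto simp: sum_metric_def)
  moreover have "sum_metric g p r \<le> sum_metric g p q + sum_metric g q r" for p q r
    unfolding sum_metric_def by (auto split: if_splits)
  ultimately show ?thesis unfolding Dmet_def using l r
    by (auto simp: sum_metric_def abs_minus_commute)
qed

theorem mainTheorem18:
  fixes C :: real
  assumes "C > 0"
  shows "\<not> (\<exists>d\<in>Dmet. preceq (d_f id C) d \<and> preceq (d_f uminus C) d)
         \<and> \<not> (\<forall>d1\<in>Dmet. \<forall>d2\<in>Dmet. \<exists>d\<in>Dmet. preceq d1 d \<and> preceq d2 d)"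
proof
  have "comp_op id \<in> Mop (d_f id C)" "comp_op uminus \<in> Mop (d_f uminus C)"
    using assms by (auto intro!: comp_op_in_Mop_d_f bij_uminus)
  then show "\<not> (\<exists>d\<in>Dmet. preceq (d_f id C) d \<and> preceq (d_f uminus C) d)"
    using no_Dmet_contains_comp_id_and_uminus by (auto simp: preceq_def)
next
  define d1 where "d1 = sum_metric (case_sum of_int of_int)"
  define d2 where "d2 = sum_metric (case_sum of_int (\<lambda>a. - of_int a))"
  have "d1 \<in> Dmet" "d2 \<in> Dmet"
    unfolding d1_def d2_def by (auto intro!: sum_metric_in_Dmet simp: abs_minus_commute)
  moreover have "comp_op id \<in> Mop d1" "comp_op uminus \<in> Mop d2"
    unfolding d1_def d2_def
    by (auto intro!: comp_op_in_Mop[where B=1] bij_uminus simp: sum_metric_def)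
  ultimately show "\<not> (\<forall>d1\<in>Dmet. \<forall>d2\<in>Dmet. \<exists>d\<in>Dmet. preceq d1 d \<and> preceq d2 d)"
    using no_Dmet_contains_comp_id_and_uminus by (fastforce simp: preceq_def)
qed

end
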